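(* Let $E$ be a congruence on $\overline{\boldsymbol{T}(X_1,\ldots,X_n)}$, $F$ a congruence on $\overline{\boldsymbol{T}(Y_1,\ldots,Y_m)}$, $V:=\boldsymbol{V}(E)$, $W:=\boldsymbol{V}(F)$, and let $\psi:\overline{\boldsymbol{T}(X_1,\ldots,X_n)}/E\to\overline{\boldsymbol{T}(Y_1,\ldots,Y_m)}/F$ be a $\boldsymbol{T}$-algebra homomorphism. If $\psi$ is injective and $F=\boldsymbol{E}(W)$, then $E=\boldsymbol{E}(V)$. In particular, when $\overline{\boldsymbol{T}(X_1,\ldots,X_n)}/E$ is isomorphic to $\overline{\boldsymbol{T}(Y_1,\ldots,Y_m)}/F$ as a $\boldsymbol{T}$-algebra, $E=\boldsymbol{E}(\boldsymbol{V}(E))$ if and only if $F=\boldsymbol{E}(\boldsymbol{V}(F))$.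
   Context: $\boldsymbol{T}=\mathbb{R}\cup\{-\infty\}$ with $a\oplus b=\max\{a,b\}$, $a\odot b=a+b$. $\overline{\boldsymbol{T}[X_1,\ldots,X_n]}$ is the tropical polynomial semiring modulo identifying polynomials defining the same function $\boldsymbol{T}^n\to\boldsymbol{T}$; it is cancellative and $\overline{\boldsymbol{T}(X_1,\ldots,X_n)}$ is its semifield of fractions. Each element defines a function $\mathbb{R}^n\to\boldsymbol{T}$ (quotients evaluated as differences). $\boldsymbol{T}$-algebras are semirings with a semiring homomorphism from $\boldsymbol{T}$; homomorphisms are compatible semiring homomorphisms. A congruence is an equivalence relation compatible with both operations. $\boldsymbol{V}(E)=\{x\in\mathbb{R}^n\mid f(x)=g(x)\ \forall(f,g)\in E\}$; for $V\subset\mathbb{R}^n$, $\boldsymbol{E}(V)=\{(f,g)\mid f(x)=g(x)\ \forall x\in V\}$. Elements of $\overline{\boldsymbol{T}(Y_1,\ldots,Y_m)}/F$ are evaluated at points of $\boldsymbol{V}(F)$ via representatives. *)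

theory Defs
  imports "HOL-Analysis.Analysis"
begin

text \<open>The tropical semifield T = R \<union> {-\<infinity>} is modelled inside ereal
 (the value \<infinity> never occurs). max is tropical addition, + is tropical
 multiplication.\<close>

type_synonym 'n tfun = "real^'n \<Rightarrow> ereal"

definition trop_poly :: "'n::finite tfun \<Rightarrow> bool" where
  "trop_poly f \<longleftrightarrow> (\<exists>A :: (('n \<Rightarrow> nat) \<times> real) set. finite A \<and>
      f = (\<lambda>x. SUP p\<in>A. ereal (snd p + (\<Sum>i\<in>UNIV. real (fst p i) * x $ i))))"

text \<open>Carrier of the semifield of fractions, identified with the functions
 R^n -> T defined by its elements: quotients p/q, q nonzero, evaluated as p - q.\<close>
definition trat :: "'n::finite tfun set" where
  "trat = {f. \<exists>p q. trop_poly p \<and> trop_poly q \<and> q \<noteq> (\<lambda>_. -\<infinity>) \<and>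
                    f = (\<lambda>x. p x - q x)}"

definition tadd :: "'n tfun \<Rightarrow> 'n tfun \<Rightarrow> 'n tfun" where
  "tadd f g = (\<lambda>x. max (f x) (g x))"

definition tmul :: "'n tfun \<Rightarrow> 'n tfun \<Rightarrow> 'n tfun" where
  "tmul f g = (\<lambda>x. f x + g x)"

definition trop_congruence :: "('n::finite tfun \<times> 'n tfun) set \<Rightarrow> bool" where
  "trop_congruence E \<longleftrightarrow> equiv trat E \<and>
     (\<forall>a b c d. (a, b) \<in> E \<longrightarrow> (c, d) \<in> E \<longrightarrow>
        (tadd a c, tadd b d) \<in> E \<and> (tmul a c, tmul b d) \<in> E)"

definition Vset :: "('n::finite tfun \<times> 'n tfun) set \<Rightarrow> (real^'n) set" where
  "Vset E = {x. \<forall>(f, g)\<in>E. f x = g x}"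

definition Eset :: "(real^'n::finite) set \<Rightarrow> ('n tfun \<times> 'n tfun) set" where
  "Eset V = {(f, g). f \<in> trat \<and> g \<in> trat \<and> (\<forall>x\<in>V. f x = g x)}"

text \<open>The quotient operations are [a] + [b] = [a + b], [a][b] = [ab], and the
 structure map T -> trat/E is t \<mapsto> [constant t].\<close>
definition trop_alg_hom ::
  "('n::finite tfun \<times> 'n tfun) set \<Rightarrow> ('m::finite tfun \<times> 'm tfun) set \<Rightarrow>
   ('n tfun set \<Rightarrow> 'm tfun set) \<Rightarrow> bool" where
  "trop_alg_hom E F \<psi> \<longleftrightarrow>
     \<psi> \<in> trat // E \<rightarrow> trat // F \<and>
     (\<forall>t::ereal. t \<noteq> \<infinity> \<longrightarrow> \<psi> (E `` {\<lambda>_. t}) = F `` {\<lambda>_. t}) \<and>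
     (\<forall>a\<in>trat. \<forall>b\<in>trat. \<forall>y\<in>\<psi> (E `` {a}). \<forall>z\<in>\<psi> (E `` {b}).
        \<psi> (E `` {tadd a b}) = F `` {tadd y z} \<and>
        \<psi> (E `` {tmul a b}) = F `` {tmul y z})"

end

theory Submission
  imports Defs
begin

text \<open>A point w of W turns \<psi> into a T-algebra homomorphism h \<mapsto> \<psi>[h](w) from the
 semifield of fractions to T. Such a homomorphism is determined by its finite values on the
 coordinates X_i, hence is evaluation at a point x, and x lies in V because the homomorphism
 factors through the quotient by E. So if f and g agree on V, then \<psi>[f] and \<psi>[g] agree at
 every point of W; since F = E(W) they are equal, and injectivity gives [f] = [g]. For the
 second statement apply the first to \<psi> and to its inverse.\<close>

definition trop_monomial :: "('n::finite \<Rightarrow> nat) \<Rightarrow> real \<Rightarrow> 'n tfun" where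
  "trop_monomial a c = (\<lambda>x. ereal (c + (\<Sum>i\<in>UNIV. real (a i) * x $ i)))"

lemma trop_poly_iff_SUP_monomials:
  "trop_poly f \<longleftrightarrow> (\<exists>A. finite A \<and> f = (\<lambda>x. SUP p\<in>A. trop_monomial (fst p) (snd p) x))"
  unfolding trop_poly_def trop_monomial_def ..

lemma trop_poly_monomial: "trop_poly (trop_monomial a c)"
  unfolding trop_poly_iff_SUP_monomials by (rule exI[of _ "{(a, c)}"]) simp

lemma trop_poly_bot: "trop_poly (\<lambda>_. -\<infinity>)"
  unfolding trop_poly_iff_SUP_monomials by (rule exI[of _ "{}"]) (simp add: bot_ereal_def)

lemma trop_poly_cases:
  assumes "trop_poly p"
  obtains "p = (\<lambda>_. -\<infinity>)" | "\<And>x. \<exists>r. p x = ereal r"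
proof -
  obtain A where A: "finite A" "p = (\<lambda>x. SUP q\<in>A. trop_monomial (fst q) (snd q) x)"
    using assms unfolding trop_poly_iff_SUP_monomials by blast
  show thesis
  proof (cases "A = {}")
    case True
    then show thesis using A that(1) by (simp add: bot_ereal_def)
  next
    case False
    have "\<exists>r. p x = ereal r" for x
    proof -
      have "p x = Max ((\<lambda>q. trop_monomial (fst q) (snd q) x) ` A)"
        using A False by (simp add: Max_Sup)
      also have "\<dots> \<in> (\<lambda>q. trop_monomial (fst q) (snd q) x) ` A"
        using A(1) False by (intro Max_in) auto
      finally show ?thesis by (auto simp: trop_monomial_def)
    qed
    then show thesis using that(2) by blast
  qed
qed

lemma trop_poly_ne_PInf: "trop_poly p \<Longrightarrow> p x \<noteq> \<infinity>"
proof (erule trop_poly_cases)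
  assume "\<And>x. \<exists>r. p x = ereal r"
  then obtain r where "p x = ereal r" by blast
  then show ?thesis by simp
qed simp

lemma trop_poly_in_trat: "trop_poly p \<Longrightarrow> p \<in> trat"
proof -
  assume "trop_poly p"
  moreover have "p = (\<lambda>x. p x - trop_monomial (\<lambda>_. 0) 0 x)"
    by (simp add: trop_monomial_def zero_ereal_def[symmetric])
  moreover have "trop_monomial (\<lambda>_. 0) 0 \<noteq> (\<lambda>_. -\<infinity>)"
    by (simp add: trop_monomial_def fun_eq_iff)
  ultimately show "p \<in> trat"
    unfolding trat_def using trop_poly_monomial by blast
qed

lemma trat_ne_PInf:
  assumes "h \<in> trat"
  shows "h x \<noteq> \<infinity>"
proof -
  obtain p q
    where pq: "trop_poly p" "trop_poly q" "q \<noteq> (\<lambda>_. -\<infinity>)" "h = (\<lambda>x. p x - q x)"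
    using assms unfolding trat_def by blast
  obtain r where "q x = ereal r" using pq(2,3) by (cases rule: trop_poly_cases) auto
  then show ?thesis using pq(4) trop_poly_ne_PInf[OF pq(1)] by (cases "p x") auto
qed

lemma const_in_trat:
  assumes "t \<noteq> \<infinity>"
  shows "(\<lambda>_. t) \<in> trat"
proof (cases t)
  case (real r)
  then have "(\<lambda>_. t) = trop_monomial (\<lambda>_. 0) r" by (simp add: trop_monomial_def fun_eq_iff)
  then show ?thesis using trop_poly_in_trat[OF trop_poly_monomial] by metis
qed (use assms trop_poly_in_trat[OF trop_poly_bot] in auto)

lemma trop_monomial_unit: "trop_monomial (\<lambda>j. of_bool (j = i)) 0 x = ereal (x $ i)"
  by (simp add: trop_monomial_def if_distrib cong: if_cong)

lemma trop_monomial_add_unit: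
  "trop_monomial (\<lambda>j. a j + of_bool (j = i)) c
    = tmul (trop_monomial a c) (trop_monomial (\<lambda>j. of_bool (j = i)) 0)"
  by (simp add: trop_monomial_unit fun_eq_iff tmul_def)
     (simp add: trop_monomial_def algebra_simps sum.distrib if_distrib cong: if_cong)

locale trop_character =
  fixes \<phi> :: "'n::finite tfun \<Rightarrow> ereal"
  assumes map_const: "t \<noteq> \<infinity> \<Longrightarrow> \<phi> (\<lambda>_. t) = t"
    and map_tadd: "a \<in> trat \<Longrightarrow> b \<in> trat \<Longrightarrow> \<phi> (tadd a b) = max (\<phi> a) (\<phi> b)"
    and map_tmul: "a \<in> trat \<Longrightarrow> b \<in> trat \<Longrightarrow> \<phi> (tmul a b) = \<phi> a + \<phi> b"
    and map_ne_PInf: "a \<in> trat \<Longrightarrow> \<phi> a \<noteq> \<infinity>"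
begin

abbreviation coordinate :: "'n \<Rightarrow> 'n tfun" where
  "coordinate i \<equiv> trop_monomial (\<lambda>j. of_bool (j = i)) 0"

lemma map_coordinate_finite: "\<exists>r. \<phi> (coordinate i) = ereal r"
proof -
  define inverse_coordinate where "inverse_coordinate = (\<lambda>x. 0 - coordinate i x)"
  have "coordinate i \<in> trat" by (rule trop_poly_in_trat[OF trop_poly_monomial])
  moreover have "inverse_coordinate \<in> trat"
  proof -
    have "inverse_coordinate = (\<lambda>x. trop_monomial (\<lambda>_. 0) 0 x - coordinate i x)"
      by (simp add: inverse_coordinate_def trop_monomial_def zero_ereal_def)
    moreover have "coordinate i \<noteq> (\<lambda>_. -\<infinity>)" by (simp add: trop_monomial_def fun_eq_iff)
    ultimately show ?thesis unfolding trat_def using trop_poly_monomial by blast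
  qed
  moreover have "tmul (coordinate i) inverse_coordinate = (\<lambda>_. 0)"
    by (simp add: tmul_def inverse_coordinate_def trop_monomial_unit fun_eq_iff zero_ereal_def)
  ultimately have "\<phi> (coordinate i) + \<phi> inverse_coordinate = 0"
    using map_tmul[of "coordinate i" inverse_coordinate] map_const[of 0] by simp
  moreover have "\<phi> (coordinate i) \<noteq> \<infinity>" "\<phi> inverse_coordinate \<noteq> \<infinity>"
    using map_ne_PInf \<open>coordinate i \<in> trat\<close> \<open>inverse_coordinate \<in> trat\<close> by auto
  ultimately show ?thesis by (cases "\<phi> (coordinate i)"; cases "\<phi> inverse_coordinate") auto
qed

definition point :: "real^'n" where
  "point = (\<chi> i. real_of_ereal (\<phi> (coordinate i)))"

lemma map_coordinate: "\<phi> (coordinate i) = ereal (point $ i)"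
  using map_coordinate_finite[of i] unfolding point_def by auto

lemma map_monomial: "\<phi> (trop_monomial a c) = trop_monomial a c point"
proof (induction "sum a UNIV" arbitrary: a)
  case 0
  then have "trop_monomial a c = (\<lambda>_. ereal c)" by (simp add: trop_monomial_def)
  then show ?case by (simp add: map_const)
next
  case (Suc k)
  then have "a \<noteq> (\<lambda>_. 0)" by auto
  then obtain i where "a i > 0" by (auto simp: fun_eq_iff)
  define b where "b = (\<lambda>j. a j - of_bool (j = i))"
  have a_eq: "a = (\<lambda>j. b j + of_bool (j = i))"
    using \<open>a i > 0\<close> by (auto simp: b_def fun_eq_iff)
  have "sum b UNIV = k"
    using Suc.hyps(2) unfolding a_eq by (simp add: sum.distrib)
  then have IH: "\<phi> (trop_monomial b c) = trop_monomial b c point" using Suc.hyps(1) by simp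
  have "\<phi> (trop_monomial a c) = \<phi> (trop_monomial b c) + \<phi> (coordinate i)"
    unfolding a_eq trop_monomial_add_unit
    by (intro map_tmul trop_poly_in_trat trop_poly_monomial)
  also have "\<dots> = trop_monomial a c point"
    unfolding IH map_coordinate a_eq trop_monomial_add_unit
    by (simp add: tmul_def trop_monomial_unit)
  finally show ?case .
qed

lemma map_trop_poly:
  assumes "trop_poly p"
  shows "\<phi> p = p point"
proof -
  obtain A where "finite A" and p: "p = (\<lambda>x. SUP q\<in>A. trop_monomial (fst q) (snd q) x)"
    using assms unfolding trop_poly_iff_SUP_monomials by blast
  have "\<phi> (\<lambda>x. SUP q\<in>A. trop_monomial (fst q) (snd q) x)
      = (SUP q\<in>A. trop_monomial (fst q) (snd q) point)"
    using \<open>finite A\<close>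
  proof (induction A rule: finite_induct)
    case empty
    then show ?case using map_const[of "-\<infinity>"] by (simp add: bot_ereal_def)
  next
    case (insert q A)
    have "(\<lambda>x. SUP q\<in>A. trop_monomial (fst q) (snd q) x) \<in> trat"
      using insert(1) by (intro trop_poly_in_trat) (auto simp: trop_poly_iff_SUP_monomials)
    moreover have "(\<lambda>x. SUP q\<in>insert q A. trop_monomial (fst q) (snd q) x)
        = tadd (trop_monomial (fst q) (snd q)) (\<lambda>x. SUP q\<in>A. trop_monomial (fst q) (snd q) x)"
      by (simp add: tadd_def fun_eq_iff sup_max)
    ultimately show ?case
      using insert(3) by (simp add: map_tadd trop_poly_in_trat trop_poly_monomial map_monomial sup_max)
  qed
  then show ?thesis using p by simp
qed

lemma map_eq_eval:
  assumes "h \<in> trat"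
  shows "\<phi> h = h point"
proof -
  obtain p q where p: "trop_poly p" and q: "trop_poly q" "q \<noteq> (\<lambda>_. -\<infinity>)"
    and h: "h = (\<lambda>x. p x - q x)"
    using assms unfolding trat_def by blast
  have q_finite: "\<exists>r. q x = ereal r" for x using q by (cases rule: trop_poly_cases) auto
  have "tmul h q = p"
  proof
    fix x
    obtain r where "q x = ereal r" using q_finite by blast
    then show "tmul h q x = p x" by (cases "p x") (simp_all add: tmul_def h)
  qed
  then have "\<phi> h + q point = p point"
    using map_tmul[OF assms trop_poly_in_trat[OF q(1)]] map_trop_poly p q(1) by simp
  moreover obtain r where "q point = ereal r" using q_finite by blast
  ultimately show ?thesis
    using map_ne_PInf[OF assms] by (cases "\<phi> h"; cases "p point") (auto simp: h)
qed

end

lemma quotient_eq_class_of_mem: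
  assumes "equiv A r" "X \<in> A // r" "x \<in> X"
  shows "X = r `` {x}"
proof -
  obtain a where X: "X = r `` {a}" using assms(2) by (rule quotientE)
  then have "(a, x) \<in> r" using assms(3) by simp
  then show ?thesis using X equiv_class_eq[OF assms(1)] by simp
qed

lemma trop_congruence_equiv: "trop_congruence E \<Longrightarrow> equiv trat E"
  unfolding trop_congruence_def by blast

text \<open>Closure of trat under the operations is read off from reflexivity of a congruence at
 a and b, which avoids multiplying out fractions of tropical polynomials.\<close>

lemma trop_congruence_closed:
  fixes E :: "('n::finite tfun \<times> 'n tfun) set" and a b :: "'n tfun"
  assumes "trop_congruence E" "a \<in> trat" "b \<in> trat"
  shows "tadd a b \<in> trat" "tmul a b \<in> trat"
proof -
  have "(a, a) \<in> E" "(b, b) \<in> E"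
    using assms equiv_class_self trop_congruence_equiv by fastforce+
  then have "(tadd a b, tadd a b) \<in> E" "(tmul a b, tmul a b) \<in> E"
    using assms(1) unfolding trop_congruence_def by blast+
  then show "tadd a b \<in> trat" "tmul a b \<in> trat"
    using equiv_type[OF trop_congruence_equiv[OF assms(1)]] by auto
qed

lemma Vset_eq: "w \<in> Vset E \<Longrightarrow> (f, g) \<in> E \<Longrightarrow> f w = g w"
  unfolding Vset_def by blast

lemma subset_Eset_Vset: "E \<subseteq> trat \<times> trat \<Longrightarrow> E \<subseteq> Eset (Vset E)"
  unfolding Eset_def Vset_def by auto

definition class_eval :: "'n tfun set \<Rightarrow> real^'n \<Rightarrow> ereal" where
  "class_eval C w = (SOME s. s \<in> C) w"

lemma class_eval_eq:
  assumes "equiv trat F" "C \<in> trat // F" "w \<in> Vset F" "s \<in> C"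
  shows "class_eval C w = s w"
proof -
  have "(SOME s. s \<in> C) \<in> C" using \<open>s \<in> C\<close> by (rule someI[where P = "\<lambda>s. s \<in> C"])
  then have "((SOME s. s \<in> C), s) \<in> F"
    using assms(1,2,4) by (intro in_quotient_imp_in_rel) auto
  then show ?thesis unfolding class_eval_def using assms(3) by (rule Vset_eq[rotated])
qed

lemma trop_alg_hom_in_quotient:
  "trop_alg_hom E F \<psi> \<Longrightarrow> h \<in> trat \<Longrightarrow> \<psi> (E `` {h}) \<in> trat // F"
  unfolding trop_alg_hom_def by (blast intro: quotientI)

lemma trop_alg_hom_ex_rep:
  assumes "trop_congruence F" "trop_alg_hom E F \<psi>" "h \<in> trat"
  obtains y where "y \<in> \<psi> (E `` {h})" "y \<in> trat"
  using trop_alg_hom_in_quotient[OF assms(2,3)]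
    in_quotient_imp_non_empty in_quotient_imp_subset trop_congruence_equiv[OF assms(1)]
  by blast

lemma trop_character_class_eval:
  fixes E :: "('n::finite tfun \<times> 'n tfun) set"
  assumes cE: "trop_congruence E" and cF: "trop_congruence F"
    and hom: "trop_alg_hom E F \<psi>" and w: "w \<in> Vset F"
  shows "trop_character (\<lambda>h. class_eval (\<psi> (E `` {h})) w)"
proof -
  have eqF: "equiv trat F" using cF by (rule trop_congruence_equiv)
  have eval_class: "class_eval (F `` {y}) w = y w" if "y \<in> trat" for y
    by (rule class_eval_eq[OF eqF quotientI[OF that] w equiv_class_self[OF eqF that]])
  have eval_rep: "class_eval (\<psi> (E `` {h})) w = y w" if "h \<in> trat" "y \<in> \<psi> (E `` {h})" for h y
    using eqF trop_alg_hom_in_quotient[OF hom that(1)] w that(2) by (rule class_eval_eq)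
  show ?thesis
  proof
    fix t :: ereal assume "t \<noteq> \<infinity>"
    then have "\<psi> (E `` {\<lambda>_. t}) = F `` {\<lambda>_. t}" using hom unfolding trop_alg_hom_def by blast
    then show "class_eval (\<psi> (E `` {\<lambda>_. t})) w = t"
      using eval_class const_in_trat[OF \<open>t \<noteq> \<infinity>\<close>] by simp
  next
    fix a b :: "'n tfun" assume a: "a \<in> trat" and b: "b \<in> trat"
    obtain y where y: "y \<in> \<psi> (E `` {a})" "y \<in> trat" using trop_alg_hom_ex_rep[OF cF hom a] .
    obtain z where z: "z \<in> \<psi> (E `` {b})" "z \<in> trat" using trop_alg_hom_ex_rep[OF cF hom b] .
    have "\<psi> (E `` {tadd a b}) = F `` {tadd y z}" "\<psi> (E `` {tmul a b}) = F `` {tmul y z}"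
      using hom a b y z unfolding trop_alg_hom_def by blast+
    then show "class_eval (\<psi> (E `` {tadd a b})) w
          = max (class_eval (\<psi> (E `` {a})) w) (class_eval (\<psi> (E `` {b})) w)"
      and "class_eval (\<psi> (E `` {tmul a b})) w
          = class_eval (\<psi> (E `` {a})) w + class_eval (\<psi> (E `` {b})) w"
      using eval_class trop_congruence_closed[OF cF y(2) z(2)] eval_rep a b y z
      by (simp_all add: tadd_def tmul_def)
  next
    fix a :: "'n tfun" assume a: "a \<in> trat"
    obtain y where "y \<in> \<psi> (E `` {a})" "y \<in> trat" using trop_alg_hom_ex_rep[OF cF hom a] .
    then show "class_eval (\<psi> (E `` {a})) w \<noteq> \<infinity>" using eval_rep a trat_ne_PInf by simp
  qed
qed

lemma trop_alg_hom_pullback_point: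
  assumes cE: "trop_congruence E" and cF: "trop_congruence F"
    and hom: "trop_alg_hom E F \<psi>" and w: "w \<in> Vset F"
  shows "\<exists>x\<in>Vset E. \<forall>h\<in>trat. class_eval (\<psi> (E `` {h})) w = h x"
proof -
  interpret trop_character "\<lambda>h. class_eval (\<psi> (E `` {h})) w"
    using assms by (rule trop_character_class_eval)
  have "point \<in> Vset E"
    unfolding Vset_def
  proof (intro CollectI ballI, clarify)
    fix f g assume fg: "(f, g) \<in> E"
    have eqE: "equiv trat E" using cE by (rule trop_congruence_equiv)
    have f: "f \<in> trat" and g: "g \<in> trat" using fg equiv_type[OF eqE] by auto
    have "E `` {f} = E `` {g}" using fg by (rule equiv_class_eq[OF eqE])
    then show "f point = g point" using map_eq_eval[OF f] map_eq_eval[OF g] by simp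
  qed
  then show ?thesis using map_eq_eval by blast
qed

lemma Eset_Vset_if_inj_trop_alg_hom:
  assumes cE: "trop_congruence E" and cF: "trop_congruence F"
    and hom: "trop_alg_hom E F \<psi>" and inj: "inj_on \<psi> (trat // E)"
    and F_closed: "F = Eset (Vset F)"
  shows "E = Eset (Vset E)"
proof
  have eqE: "equiv trat E" using cE by (rule trop_congruence_equiv)
  have eqF: "equiv trat F" using cF by (rule trop_congruence_equiv)
  show "E \<subseteq> Eset (Vset E)" using equiv_type[OF eqE] by (rule subset_Eset_Vset)
  show "Eset (Vset E) \<subseteq> E"
  proof (rule subrelI)
    fix f g assume "(f, g) \<in> Eset (Vset E)"
    then have f: "f \<in> trat" and g: "g \<in> trat" and agree: "\<And>x. x \<in> Vset E \<Longrightarrow> f x = g x"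
      unfolding Eset_def by auto
    obtain y where y: "y \<in> \<psi> (E `` {f})" "y \<in> trat" using trop_alg_hom_ex_rep[OF cF hom f] .
    obtain z where z: "z \<in> \<psi> (E `` {g})" "z \<in> trat" using trop_alg_hom_ex_rep[OF cF hom g] .
    have "y w = z w" if w: "w \<in> Vset F" for w
    proof -
      obtain x where "x \<in> Vset E" and x: "\<And>h. h \<in> trat \<Longrightarrow> class_eval (\<psi> (E `` {h})) w = h x"
        using trop_alg_hom_pullback_point[OF cE cF hom w] by blast
      have "y w = f x"
        using x[OF f] class_eval_eq[OF eqF trop_alg_hom_in_quotient[OF hom f] w y(1)] by simp
      also have "\<dots> = g x" using agree \<open>x \<in> Vset E\<close> .
      also have "\<dots> = z w"
        using x[OF g] class_eval_eq[OF eqF trop_alg_hom_in_quotient[OF hom g] w z(1)] by simp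
      finally show ?thesis .
    qed
    then have "(y, z) \<in> F"
      using y(2) z(2) F_closed unfolding Eset_def by auto
    then have "\<psi> (E `` {f}) = \<psi> (E `` {g})"
      by (rule quotient_eqI[OF eqF trop_alg_hom_in_quotient[OF hom f]
            trop_alg_hom_in_quotient[OF hom g] y(1) z(1)])
    then have "E `` {f} = E `` {g}"
      by (rule inj_onD[OF inj _ quotientI[OF f] quotientI[OF g]])
    then show "(f, g) \<in> E" using eqE g by (rule eq_equiv_class)
  qed
qed

lemma trop_alg_hom_inv_into:
  assumes cE: "trop_congruence E" and cF: "trop_congruence F"
    and hom: "trop_alg_hom E F \<psi>" and bij: "bij_betw \<psi> (trat // E) (trat // F)"
  shows "trop_alg_hom F E (inv_into (trat // E) \<psi>)"
proof -
  let ?\<psi>' = "inv_into (trat // E) \<psi>"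
  have eqE: "equiv trat E" using cE by (rule trop_congruence_equiv)
  have eqF: "equiv trat F" using cF by (rule trop_congruence_equiv)
  have maps: "?\<psi>' \<in> trat // F \<rightarrow> trat // E"
    using bij_betw_inv_into[OF bij] by (auto dest: bij_betwE)
  have inv_left: "?\<psi>' (\<psi> X) = X" if "X \<in> trat // E" for X
    using bij_betw_imp_inj_on[OF bij] that by (rule inv_into_f_f)
  have inv_right: "\<psi> (?\<psi>' Y) = Y" if "Y \<in> trat // F" for Y
    using bij that by (simp add: bij_betw_def f_inv_into_f)
  have rep: "?\<psi>' (F `` {a}) = E `` {y}" "y \<in> trat" "a \<in> \<psi> (E `` {y})"
    if a: "a \<in> trat" and y: "y \<in> ?\<psi>' (F `` {a})" for a y
  proof -
    have a_class: "?\<psi>' (F `` {a}) \<in> trat // E" using maps quotientI[OF a] by blast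
    show y_class: "?\<psi>' (F `` {a}) = E `` {y}"
      using eqE a_class y by (rule quotient_eq_class_of_mem)
    show "y \<in> trat" using in_quotient_imp_subset[OF eqE a_class] y by blast
    have "\<psi> (E `` {y}) = F `` {a}" using inv_right[OF quotientI[OF a]] y_class by simp
    then show "a \<in> \<psi> (E `` {y})" using equiv_class_self[OF eqF a] by simp
  qed
  have ops: "?\<psi>' (F `` {tadd a b}) = E `` {tadd y z} \<and> ?\<psi>' (F `` {tmul a b}) = E `` {tmul y z}"
    if a: "a \<in> trat" and b: "b \<in> trat" and y: "y \<in> ?\<psi>' (F `` {a})" and z: "z \<in> ?\<psi>' (F `` {b})"
    for a b y z
  proof -
    have "\<psi> (E `` {tadd y z}) = F `` {tadd a b}" "\<psi> (E `` {tmul y z}) = F `` {tmul a b}"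
      using hom rep[OF a y] rep[OF b z] unfolding trop_alg_hom_def by blast+
    then show ?thesis
      using inv_left[OF quotientI[OF trop_congruence_closed(1)[OF cE rep(2)[OF a y] rep(2)[OF b z]]]]
        inv_left[OF quotientI[OF trop_congruence_closed(2)[OF cE rep(2)[OF a y] rep(2)[OF b z]]]]
      by simp
  qed
  have const: "?\<psi>' (F `` {\<lambda>_. t}) = E `` {\<lambda>_. t}" if "t \<noteq> \<infinity>" for t
  proof -
    have "\<psi> (E `` {\<lambda>_. t}) = F `` {\<lambda>_. t}" using hom that unfolding trop_alg_hom_def by blast
    then show ?thesis using inv_left[OF quotientI[OF const_in_trat[OF that]]] by simp
  qed
  show ?thesis unfolding trop_alg_hom_def using maps const ops by blast
qed

theorem corollary3p16:
  fixes E :: "('n::finite tfun \<times> 'n tfun) set"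
    and F :: "('m::finite tfun \<times> 'm tfun) set"
  assumes "trop_congruence E" and "trop_congruence F"
  shows "(\<forall>\<psi>. trop_alg_hom E F \<psi> \<and> inj_on \<psi> (trat // E) \<and> F = Eset (Vset F)
            \<longrightarrow> E = Eset (Vset E)) \<and>
         ((\<exists>\<psi>. trop_alg_hom E F \<psi> \<and> bij_betw \<psi> (trat // E) (trat // F))
            \<longrightarrow> (E = Eset (Vset E) \<longleftrightarrow> F = Eset (Vset F)))"
proof (intro conjI allI impI)
  fix \<psi> assume "trop_alg_hom E F \<psi> \<and> inj_on \<psi> (trat // E) \<and> F = Eset (Vset F)"
  then show "E = Eset (Vset E)" using Eset_Vset_if_inj_trop_alg_hom[OF assms] by blast
next
  assume "\<exists>\<psi>. trop_alg_hom E F \<psi> \<and> bij_betw \<psi> (trat // E) (trat // F)"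
  then obtain \<psi> where hom: "trop_alg_hom E F \<psi>" and bij: "bij_betw \<psi> (trat // E) (trat // F)"
    by blast
  have hom': "trop_alg_hom F E (inv_into (trat // E) \<psi>)"
    using assms hom bij by (rule trop_alg_hom_inv_into)
  have inj': "inj_on (inv_into (trat // E) \<psi>) (trat // F)"
    using bij_betw_inv_into[OF bij] by (rule bij_betw_imp_inj_on)
  show "E = Eset (Vset E) \<longleftrightarrow> F = Eset (Vset F)"
    using Eset_Vset_if_inj_trop_alg_hom[OF assms hom bij_betw_imp_inj_on[OF bij]]
      Eset_Vset_if_inj_trop_alg_hom[OF assms(2,1) hom' inj'] by blast
qed

end
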